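(* Let $X\subset\mathbb{R}^n$ be a finite set of points, let $\mathcal{O}\subset\mathcal{T}_n$ be an order ideal, and let $G\subset\mathbb{R}[x_1,\ldots,x_n]$ be an $\mathcal{O}$-border basis of the vanishing ideal $\mathcal{I}(X)=\{g\in\mathbb{R}[x_1,\ldots,x_n]: g(\mathbf{x})=0\ \forall \mathbf{x}\in X\}$. Then: (1) every $o\in\mathcal{O}\setminus\{1\}$ satisfies $\|o\|_{\mathrm{gw},X}\neq 0$; (2) every border term $b\in\partial\mathcal{O}$ satisfies $\|b\|_{\mathrm{gw},X}\neq 0$; (3) every $g\in G$ satisfies $\|g\|_{\mathrm{gw},X}\neq 0$.
   Context: $\mathcal{T}_n$ is the set of terms of $\mathbb{R}[x_1,\ldots,x_n]$. An order ideal is a finite $\mathcal{O}\subset\mathcal{T}_n$ closed under taking divisors; its border is $\partial\mathcal{O}=(\bigcup_k x_k\mathcal{O})\setminus\mathcal{O}$. An $\mathcal{O}$-border prebasis is a set of polynomials of the form $b-\sum_{o\in\mathcal{O}}c_o o$ with $b\in\partial\mathcal{O}$, $c_o\in\mathbb{R}$ (one for each $b$); it is an $\mathcal{O}$-border basis of an ideal $I$ if it lies in $I$ and $\mathcal{O}$ is a basis of the $\mathbb{R}$-vector space $\mathbb{R}[x_1,\ldots,x_n]/I$. For $X=\{\mathbf{x}_1,\ldots,\mathbf{x}_N\}$, the gradient norm of a polynomial $g$ is $\|g\|_{g,X}=\sqrt{\sum_{\mathbf{x}\in X}\|\nabla g(\mathbf{x})\|^2}/Z$ with $Z=\sqrt{\sum_{k=1}^n\deg_k(g)^2}$,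 and $\|g\|_{g,X}:=0$ if $g$ is constant. For $g=\sum_i c_it_i$ ($c_i\in\mathbb{R}$, distinct terms $t_i$), the gradient-weighted norm is $\|g\|_{\mathrm{gw},X}=\sqrt{\sum_i c_i^2\|t_i\|_{g,X}^2}$. *)

theory Defs
  imports "HOL-Analysis.Analysis" "HOL-Library.Poly_Mapping"
begin

(* Terms of R[x_0..x_{n-1}] are exponent vectors (nat =>0 nat) supported on {..<n};
   polynomials are finitely supported maps from terms to real coefficients;
   points of R^n are functions nat => real vanishing outside {..<n}. *)

type_synonym pterm = "nat \<Rightarrow>\<^sub>0 nat"
type_synonym rpoly = "pterm \<Rightarrow>\<^sub>0 real"

definition terms :: "nat \<Rightarrow> pterm set" where
  "terms n = {t. Poly_Mapping.keys t \<subseteq> {..<n}}"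

definition polys :: "nat \<Rightarrow> rpoly set" where
  "polys n = {p. Poly_Mapping.keys p \<subseteq> terms n}"

definition points :: "nat \<Rightarrow> (nat \<Rightarrow> real) set" where
  "points n = {x. \<forall>i\<ge>n. x i = 0}"

definition term_poly :: "pterm \<Rightarrow> rpoly" where
  "term_poly t = Poly_Mapping.single t 1"

definition eval_term :: "pterm \<Rightarrow> (nat \<Rightarrow> real) \<Rightarrow> real" where
  "eval_term t x = (\<Prod>i\<in>Poly_Mapping.keys t. x i ^ Poly_Mapping.lookup t i)"

definition eval_poly :: "rpoly \<Rightarrow> (nat \<Rightarrow> real) \<Rightarrow> real" where
  "eval_poly p x = (\<Sum>t\<in>Poly_Mapping.keys p. Poly_Mapping.lookup p t * eval_term t x)"

definition pderiv_at :: "rpoly \<Rightarrow> nat \<Rightarrow> (nat \<Rightarrow> real) \<Rightarrow> real" where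
  "pderiv_at p k x = deriv (\<lambda>s. eval_poly p (x(k := s))) (x k)"

definition deg_var :: "nat \<Rightarrow> rpoly \<Rightarrow> nat" where
  "deg_var k p = (if Poly_Mapping.keys p = {} then 0 else Max ((\<lambda>t. Poly_Mapping.lookup t k) ` Poly_Mapping.keys p))"

definition is_const :: "rpoly \<Rightarrow> bool" where
  "is_const p \<longleftrightarrow> Poly_Mapping.keys p \<subseteq> {0}"

definition grad_norm :: "nat \<Rightarrow> (nat \<Rightarrow> real) set \<Rightarrow> rpoly \<Rightarrow> real" where
  "grad_norm n X g =
     (if is_const g then 0
      else sqrt (\<Sum>x\<in>X. \<Sum>k<n. (pderiv_at g k x)\<^sup>2)
           / sqrt (\<Sum>k<n. (real (deg_var k g))\<^sup>2))"

definition gw_norm :: "nat \<Rightarrow> (nat \<Rightarrow> real) set \<Rightarrow> rpoly \<Rightarrow> real" where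
  "gw_norm n X g = sqrt (\<Sum>t\<in>Poly_Mapping.keys g. (Poly_Mapping.lookup g t)\<^sup>2 * (grad_norm n X (term_poly t))\<^sup>2)"

definition divides_term :: "pterm \<Rightarrow> pterm \<Rightarrow> bool" where
  "divides_term s t \<longleftrightarrow> (\<forall>i. Poly_Mapping.lookup s i \<le> Poly_Mapping.lookup t i)"

definition order_ideal :: "nat \<Rightarrow> pterm set \<Rightarrow> bool" where
  "order_ideal n OI \<longleftrightarrow> finite OI \<and> OI \<subseteq> terms n \<and>
     (\<forall>t\<in>OI. \<forall>s. divides_term s t \<longrightarrow> s \<in> OI)"

definition var_times :: "nat \<Rightarrow> pterm \<Rightarrow> pterm" where
  "var_times k t = t + Poly_Mapping.single k 1"

definition border :: "nat \<Rightarrow> pterm set \<Rightarrow> pterm set" where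
  "border n OI = (\<Union>k<n. var_times k ` OI) - OI"

definition vanishing_ideal :: "nat \<Rightarrow> (nat \<Rightarrow> real) set \<Rightarrow> rpoly set" where
  "vanishing_ideal n X = {g \<in> polys n. \<forall>x\<in>X. eval_poly g x = 0}"

definition border_prebasis :: "nat \<Rightarrow> pterm set \<Rightarrow> rpoly set \<Rightarrow> bool" where
  "border_prebasis n OI G \<longleftrightarrow>
     (\<exists>c :: pterm \<Rightarrow> pterm \<Rightarrow> real.
        G = (\<lambda>b. term_poly b - (\<Sum>u\<in>OI. Poly_Mapping.single u (c b u))) ` border n OI)"

(* OI is a basis of the R-vector space R[x]/I: residues of OI span and are independent *)
definition basis_mod :: "nat \<Rightarrow> pterm set \<Rightarrow> rpoly set \<Rightarrow> bool" where
  "basis_mod n OI I \<longleftrightarrow>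
     (\<forall>p\<in>polys n. \<exists>c. p - (\<Sum>u\<in>OI. Poly_Mapping.single u (c u)) \<in> I) \<and>
     (\<forall>c. (\<Sum>u\<in>OI. Poly_Mapping.single u (c u)) \<in> I \<longrightarrow> (\<forall>u\<in>OI. c u = 0))"

definition border_basis :: "nat \<Rightarrow> pterm set \<Rightarrow> rpoly set \<Rightarrow> rpoly set \<Rightarrow> bool" where
  "border_basis n OI G I \<longleftrightarrow> border_prebasis n OI G \<and> G \<subseteq> I \<and> basis_mod n OI I"

end

theory Submission
  imports Defs
begin

text \<open>If a term \<open>t\<close> is divisible by \<open>x\<^sub>k\<close> and \<open>t / x\<^sub>k\<close> lies in \<open>\<O>\<close>, then
  \<open>\<partial>\<^sub>k t = deg\<^sub>k(t) \<cdot> (t / x\<^sub>k)\<close>. Since the residues of \<open>\<O>\<close> modulo \<open>\<I>(X)\<close> are linearly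
  independent, \<open>t / x\<^sub>k \<notin> \<I>(X)\<close>, so \<open>\<partial>\<^sub>k t\<close> does not vanish at some point of \<open>X\<close> and
  \<open>\<parallel>t\<parallel>\<^sub>g\<^sub>,\<^sub>X \<noteq> 0\<close>. Every \<open>o \<in> \<O> - {1}\<close> and every border term \<open>b = x\<^sub>k o\<close> is such a
  term. A border basis polynomial \<open>b - \<Sum> c\<^sub>o o\<close> has coefficient 1 at \<open>b\<close>, so its
  gradient-weighted norm is at least \<open>\<parallel>b\<parallel>\<^sub>g\<^sub>,\<^sub>X > 0\<close>.\<close>

lemma eval_poly_term_poly: "eval_poly (term_poly t) x = eval_term t x"
  by (simp add: eval_poly_def term_poly_def)

lemma pderiv_at_term_poly:
  assumes "Poly_Mapping.lookup t k > 0"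
  shows "pderiv_at (term_poly t) k x
       = real (Poly_Mapping.lookup t k) * eval_term (t - Poly_Mapping.single k 1) x"
proof -
  define m where "m = Poly_Mapping.lookup t k"
  define C where "C = (\<Prod>i\<in>Poly_Mapping.keys t - {k}. x i ^ Poly_Mapping.lookup t i)"
  have k: "k \<in> Poly_Mapping.keys t" using assms by (simp add: Poly_Mapping.in_keys_iff)
  have eval_upd: "eval_poly (term_poly t) (x(k := s)) = s ^ m * C" for s
    unfolding eval_poly_term_poly eval_term_def C_def m_def
    by (simp add: prod.remove[OF finite_keys k])
  have "((\<lambda>s. s ^ m * C) has_real_derivative real m * x k ^ (m - 1) * C) (at (x k))"
    by (intro DERIV_cmult_right) (use DERIV_pow[of m "x k" UNIV] in simp)
  then have "pderiv_at (term_poly t) k x = real m * x k ^ (m - 1) * C"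
    unfolding pderiv_at_def eval_upd by (rule DERIV_imp_deriv)
  moreover have "eval_term (t - Poly_Mapping.single k 1) x = x k ^ (m - 1) * C"
  proof -
    have keys_sub: "Poly_Mapping.keys (t - Poly_Mapping.single k 1) \<subseteq> Poly_Mapping.keys t"
      by (auto simp: Poly_Mapping.in_keys_iff lookup_minus lookup_single when_def split: if_splits)
    have "eval_term (t - Poly_Mapping.single k 1) x
        = (\<Prod>i\<in>Poly_Mapping.keys t. x i ^ Poly_Mapping.lookup (t - Poly_Mapping.single k 1) i)"
      unfolding eval_term_def
      by (rule prod.mono_neutral_left[OF finite_keys keys_sub]) (auto simp: Poly_Mapping.in_keys_iff)
    also have "\<dots> = x k ^ (m - 1) * C"
      unfolding C_def m_def
      by (simp add: prod.remove[OF finite_keys k] lookup_minus lookup_single when_def)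
    finally show ?thesis .
  qed
  ultimately show ?thesis by (simp add: m_def)
qed

lemma basis_mod_term_poly_notin:
  assumes "basis_mod n OI I" and "finite OI" and "s \<in> OI"
  shows "term_poly s \<notin> I"
proof
  assume "term_poly s \<in> I"
  define c where "c u = (if u = s then 1 else 0 :: real)" for u
  have "(\<Sum>u\<in>OI. Poly_Mapping.single u (c u)) = (\<Sum>u\<in>OI. if u = s then term_poly u else 0)"
    by (rule sum.cong) (auto simp: c_def term_poly_def)
  also have "\<dots> = term_poly s"
    using assms(2,3) by simp
  finally have "(\<Sum>u\<in>OI. Poly_Mapping.single u (c u)) \<in> I"
    using \<open>term_poly s \<in> I\<close> by simp
  then have "c s = 0"
    using assms(1,3) unfolding basis_mod_def by blast
  then show False by (simp add: c_def)
qed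

lemma term_poly_notin_vanishing_ideal:
  assumes "s \<in> terms n" and "term_poly s \<notin> vanishing_ideal n X"
  obtains x where "x \<in> X" and "eval_term s x \<noteq> 0"
  using assms by (auto simp: vanishing_ideal_def polys_def term_poly_def eval_poly_term_poly[unfolded term_poly_def])

lemma grad_norm_term_poly_nonzero:
  assumes "finite X" and "k < n" and "Poly_Mapping.lookup t k > 0"
    and "x \<in> X" and "eval_term (t - Poly_Mapping.single k 1) x \<noteq> 0"
  shows "grad_norm n X (term_poly t) \<noteq> 0"
proof -
  have "t \<noteq> 0" using assms(3) by auto
  then have nonconst: "\<not> is_const (term_poly t)"
    by (simp add: is_const_def term_poly_def)
  have "pderiv_at (term_poly t) k x \<noteq> 0"
    using assms(3,5) by (simp add: pderiv_at_term_poly)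
  then have "(\<Sum>k<n. (pderiv_at (term_poly t) k x)\<^sup>2) > 0"
    using assms(2) by (intro sum_pos2[of _ k]) auto
  then have grad_pos: "(\<Sum>x\<in>X. \<Sum>k<n. (pderiv_at (term_poly t) k x)\<^sup>2) > 0"
    using assms(1,4) by (intro sum_pos2[of _ x]) (auto intro: sum_nonneg)
  have "deg_var j (term_poly t) = Poly_Mapping.lookup t j" for j
    by (simp add: deg_var_def term_poly_def)
  moreover have "(\<Sum>j<n. (real (Poly_Mapping.lookup t j))\<^sup>2) > 0"
    using assms(2,3) by (intro sum_pos2[of _ k]) auto
  ultimately show ?thesis
    using nonconst grad_pos by (simp add: grad_norm_def)
qed

lemma grad_norm_term_poly_nonzero_if_quotient_in:
  assumes "finite X" and "basis_mod n OI (vanishing_ideal n X)"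
    and "finite OI" and "OI \<subseteq> terms n"
    and "k < n" and "Poly_Mapping.lookup t k > 0" and "t - Poly_Mapping.single k 1 \<in> OI"
  shows "grad_norm n X (term_poly t) \<noteq> 0"
proof -
  have "term_poly (t - Poly_Mapping.single k 1) \<notin> vanishing_ideal n X"
    using assms(2,3,7) by (rule basis_mod_term_poly_notin)
  then obtain x where "x \<in> X" and "eval_term (t - Poly_Mapping.single k 1) x \<noteq> 0"
    using assms(4,7) by (auto elim: term_poly_notin_vanishing_ideal)
  then show ?thesis
    using assms(1,5,6) by (intro grad_norm_term_poly_nonzero)
qed

lemma gw_norm_term_poly: "gw_norm n X (term_poly t) = \<bar>grad_norm n X (term_poly t)\<bar>"
  by (simp add: gw_norm_def term_poly_def)

lemma gw_norm_nonzero_if_coeff: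
  assumes "Poly_Mapping.lookup g b \<noteq> 0" and "grad_norm n X (term_poly b) \<noteq> 0"
  shows "gw_norm n X g \<noteq> 0"
proof -
  have "b \<in> Poly_Mapping.keys g"
    using assms(1) by (simp add: Poly_Mapping.in_keys_iff)
  then have "(\<Sum>t\<in>Poly_Mapping.keys g.
      (Poly_Mapping.lookup g t)\<^sup>2 * (grad_norm n X (term_poly t))\<^sup>2) > 0"
    using assms by (intro sum_pos2[of _ b]) auto
  then show ?thesis by (simp add: gw_norm_def)
qed

lemma order_ideal_divide_var:
  assumes "order_ideal n OI" and "u \<in> OI" and "k \<in> Poly_Mapping.keys u"
  shows "u - Poly_Mapping.single k 1 \<in> OI" and "k < n"
proof -
  have "divides_term (u - Poly_Mapping.single k 1) u"
    by (simp add: divides_term_def lookup_minus)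
  then show "u - Poly_Mapping.single k 1 \<in> OI"
    using assms(1,2) by (auto simp: order_ideal_def)
  show "k < n"
    using assms by (auto simp: order_ideal_def terms_def)
qed

lemma lookup_border_prebasis_poly:
  assumes "b \<notin> OI"
  shows "Poly_Mapping.lookup (term_poly b - (\<Sum>u\<in>OI. Poly_Mapping.single u (c u))) b = 1"
proof -
  have "(\<Sum>u\<in>OI. Poly_Mapping.lookup (Poly_Mapping.single u (c u)) b) = 0"
    using assms by (intro sum.neutral) (auto simp: lookup_single when_def)
  then show ?thesis
    by (simp add: lookup_minus lookup_sum term_poly_def)
qed

lemma grad_norm_order_ideal_nonzero:
  assumes "finite X" and "order_ideal n OI" and "basis_mod n OI (vanishing_ideal n X)"
    and "u \<in> OI" and "u \<noteq> 0"
  shows "grad_norm n X (term_poly u) \<noteq> 0"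
proof -
  obtain k where k: "k \<in> Poly_Mapping.keys u"
    using assms(5) by (metis Poly_Mapping.keys_eq_empty ex_in_conv)
  show ?thesis
  proof (rule grad_norm_term_poly_nonzero_if_quotient_in)
    show "finite OI" "OI \<subseteq> terms n"
      using assms(2) by (simp_all add: order_ideal_def)
    show "k < n" "u - Poly_Mapping.single k 1 \<in> OI"
      using order_ideal_divide_var[OF assms(2,4) k] by simp_all
    show "Poly_Mapping.lookup u k > 0"
      using k by (simp add: in_keys_iff)
  qed (use assms(1,3) in simp_all)
qed

lemma grad_norm_border_nonzero:
  assumes "finite X" and "order_ideal n OI" and "basis_mod n OI (vanishing_ideal n X)"
    and "b \<in> border n OI"
  shows "grad_norm n X (term_poly b) \<noteq> 0"
proof -
  obtain k u where "k < n" "u \<in> OI" "b = u + Poly_Mapping.single k 1"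
    using assms(4) by (auto simp: border_def var_times_def)
  then show ?thesis
    using assms(1-3) unfolding order_ideal_def
    by (intro grad_norm_term_poly_nonzero_if_quotient_in[of X n OI k]) (auto simp: lookup_add)
qed

lemma gw_norm_border_prebasis_poly_nonzero:
  assumes "b \<in> border n OI" and "grad_norm n X (term_poly b) \<noteq> 0"
  shows "gw_norm n X (term_poly b - (\<Sum>u\<in>OI. Poly_Mapping.single u (c u))) \<noteq> 0"
proof (rule gw_norm_nonzero_if_coeff)
  show "Poly_Mapping.lookup (term_poly b - (\<Sum>u\<in>OI. Poly_Mapping.single u (c u))) b \<noteq> 0"
    using assms(1) by (subst lookup_border_prebasis_poly) (simp_all add: border_def)
qed (fact assms(2))

theorem mainTheorem2:
  fixes n :: nat and X :: "(nat \<Rightarrow> real) set" and OI :: "pterm set" and G :: "rpoly set"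
  assumes "finite X" and "X \<subseteq> points n"
    and "order_ideal n OI"
    and "border_basis n OI G (vanishing_ideal n X)"
  shows "(\<forall>u\<in>OI - {0}. gw_norm n X (term_poly u) \<noteq> 0)
       \<and> (\<forall>b\<in>border n OI. gw_norm n X (term_poly b) \<noteq> 0)
       \<and> (\<forall>g\<in>G. gw_norm n X g \<noteq> 0)"
proof -
  have bm: "basis_mod n OI (vanishing_ideal n X)"
    using assms(4) by (simp add: border_basis_def)
  obtain c where G: "G = (\<lambda>b. term_poly b - (\<Sum>u\<in>OI. Poly_Mapping.single u (c b u))) ` border n OI"
    using assms(4) by (auto simp: border_basis_def border_prebasis_def)
  note order_ideal_grad = grad_norm_order_ideal_nonzero[OF assms(1,3) bm]
  note border_grad = grad_norm_border_nonzero[OF assms(1,3) bm]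
  show ?thesis
    unfolding G gw_norm_term_poly
    using order_ideal_grad border_grad gw_norm_border_prebasis_poly_nonzero
    by auto
qed

end
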